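(* In non-adaptive group testing of $N$ items with a defective set $S_\omega$ of size $K$, using $T$ tests with a random design whose entries are i.i.d. with law $Q$ on $\{0,1\}$ and a memoryless test channel with per-test law $p(y\mid x_S)$, a lower bound on the total number of tests required to recover the defective set (with vanishing error probability, by any decoder) is $$T\ge\max_{i\in\{1,\dots,K\},\ (\mathcal S^1,\mathcal S^2)\in\Xi_{S_\omega}^{\{i\}}}\frac{\log\binom{N-K+i}{i}}{I(X_{\mathcal S^1};X_{\mathcal S^2},Y)},$$ where $\Xi_{S_\omega}^{\{i\}}$ is the set of pairs of disjoint sets $(\mathcal S^1,\mathcal S^2)$ with $\mathcal S^1\cup\mathcal S^2=S_\omega$, $|\mathcal S^1|=i$, $|\mathcal S^2|=K-i$.
   Context: The design is an $N\times T$ binary matrix (row $j$ = codeword of item $j$, entry $1$ iff item $j$ is in test $t$). Given defective set $S$, outcomes satisfy $p(Y^T\mid\mathbf X_S)=\prod_t p(Y(t)\mid X_S(t))$ where $\mathbf X_S$ is the submatrix of rows in $S$ and $X_S(t)$ its $t$-th column. The defective set is uniformly distributed over the $K$-subsets. In the mutual information, $X_{S_\omega}=(X_{\mathcal S^1},X_{\mathcal S^2})$ is a single per-test input with i.i.d. $Q$ entries and $Y$ the corresponding binary test outcome; $\log$ is base 2. *)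

theory Defs
  imports Complex_Main "HOL-Library.FuncSet"
begin

text \<open>Items are 0..<N, tests are 0..<T.  A design is a boolean N x T matrix
  (entry (j,t) true iff item j is in test t), an outcome vector is indexed by tests.\<close>

definition ksubsets :: "nat \<Rightarrow> nat \<Rightarrow> nat set set" where
  "ksubsets N K = {S. S \<subseteq> {0..<N} \<and> card S = K}"

definition bern :: "real \<Rightarrow> bool \<Rightarrow> real" where
  "bern q b = (if b then q else 1 - q)"

definition designs :: "nat \<Rightarrow> nat \<Rightarrow> (nat \<times> nat \<Rightarrow> bool) set" where
  "designs N T = PiE ({0..<N} \<times> {0..<T}) (\<lambda>_. UNIV)"

definition outcomes :: "nat \<Rightarrow> (nat \<Rightarrow> bool) set" where
  "outcomes T = PiE {0..<T} (\<lambda>_. UNIV)"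

definition design_prob :: "real \<Rightarrow> nat \<Rightarrow> nat \<Rightarrow> (nat \<times> nat \<Rightarrow> bool) \<Rightarrow> real" where
  "design_prob q N T X = (\<Prod>p\<in>{0..<N} \<times> {0..<T}. bern q (X p))"

text \<open>Per-test channel input X_S(t): the column entries of the K defective items,
  listed in increasing order of item index (positions 0..<K).\<close>
definition test_input :: "nat \<Rightarrow> nat set \<Rightarrow> (nat \<times> nat \<Rightarrow> bool) \<Rightarrow> nat \<Rightarrow> (nat \<Rightarrow> bool)" where
  "test_input K S X t = restrict (\<lambda>k. X (sorted_list_of_set S ! k, t)) {0..<K}"

definition chan_prob :: "nat \<Rightarrow> ((nat \<Rightarrow> bool) \<Rightarrow> bool \<Rightarrow> real) \<Rightarrow> nat set
    \<Rightarrow> (nat \<times> nat \<Rightarrow> bool) \<Rightarrow> nat \<Rightarrow> (nat \<Rightarrow> bool) \<Rightarrow> real" where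
  "chan_prob K W S X T Y = (\<Prod>t<T. W (test_input K S X t) (Y t))"

definition valid_channel :: "nat \<Rightarrow> ((nat \<Rightarrow> bool) \<Rightarrow> bool \<Rightarrow> real) \<Rightarrow> bool" where
  "valid_channel K W \<longleftrightarrow>
     (\<forall>u y. 0 \<le> W u y) \<and> (\<forall>u. W u True + W u False = 1) \<and>
     (\<forall>\<pi> u y. bij_betw \<pi> {0..<K} {0..<K} \<longrightarrow>
        W (restrict (u \<circ> \<pi>) {0..<K}) y = W (restrict u {0..<K}) y)"

definition error_prob :: "nat \<Rightarrow> nat \<Rightarrow> nat \<Rightarrow> real \<Rightarrow> ((nat \<Rightarrow> bool) \<Rightarrow> bool \<Rightarrow> real)
    \<Rightarrow> ((nat \<times> nat \<Rightarrow> bool) \<Rightarrow> (nat \<Rightarrow> bool) \<Rightarrow> nat set) \<Rightarrow> real" where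
  "error_prob N K T q W dec =
     (\<Sum>S\<in>ksubsets N K. \<Sum>X\<in>designs N T. \<Sum>Y\<in>outcomes T.
        design_prob q N T X * chan_prob K W S X T Y * (if dec X Y = S then 0 else 1))
     / real (card (ksubsets N K))"

text \<open>Mutual information (base 2) I(f(Z); g(Z)) for Z with finite pmf p on Zs.\<close>
definition mutual_info :: "'z set \<Rightarrow> ('z \<Rightarrow> real) \<Rightarrow> ('z \<Rightarrow> 'a) \<Rightarrow> ('z \<Rightarrow> 'b) \<Rightarrow> real" where
  "mutual_info Zs p f g =
     (\<Sum>z\<in>Zs. if p z = 0 then 0 else
        p z * log 2 ((\<Sum>z'\<in>{z'\<in>Zs. f z' = f z \<and> g z' = g z}. p z') /
          ((\<Sum>z'\<in>{z'\<in>Zs. f z' = f z}. p z') * (\<Sum>z'\<in>{z'\<in>Zs. g z' = g z}. p z'))))"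

text \<open>I(X_{S^1}; X_{S^2}, Y) for a single test: input U on positions 0..<K i.i.d. Q,
  Y ~ W(U,.), S^1 occupying the positions A and S^2 the remaining positions.\<close>
definition single_letter_mi :: "nat \<Rightarrow> real \<Rightarrow> ((nat \<Rightarrow> bool) \<Rightarrow> bool \<Rightarrow> real) \<Rightarrow> nat set \<Rightarrow> real" where
  "single_letter_mi K q W A =
     mutual_info (PiE {0..<K} (\<lambda>_. UNIV) \<times> (UNIV :: bool set))
       (\<lambda>(u, y). (\<Prod>k<K. bern q (u k)) * W u y)
       (\<lambda>(u, y). restrict u A)
       (\<lambda>(u, y). (restrict u ({0..<K} - A), y))"

definition positions :: "nat \<Rightarrow> nat set \<Rightarrow> nat set \<Rightarrow> nat set" where
  "positions K S S1 = {k \<in> {0..<K}. sorted_list_of_set S ! k \<in> S1}"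

definition Xi :: "nat set \<Rightarrow> nat \<Rightarrow> nat \<Rightarrow> (nat set \<times> nat set) set" where
  "Xi S K i = {(S1, S2). S1 \<inter> S2 = {} \<and> S1 \<union> S2 = S \<and> card S1 = i \<and> card S2 = K - i}"

end

theory Submission
  imports Defs
begin

text \<open>Split the defective set as \<open>S1 \<union> S2\<close> with \<open>|S1| = i\<close>. Averaging the error over all
  ways of doing so yields a fixed \<open>S2\<close> such that recovering \<open>S1\<close>, uniform among the
  \<open>C = (N - K + i) choose i\<close> sets avoiding \<open>S2\<close>, still has small error. Compare the joint law of
  \<open>S1\<close>, design and outcomes with a reference law in which every outcome is drawn from
  \<open>p(y | x_S2)\<close>, the entries of \<open>S1\<close> being averaged out under \<open>Q\<close>. By the symmetry of the
  channel this reference law does not depend on \<open>S1\<close>, so under it any decoder is right with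
  probability at most \<open>1/C\<close>; the log-sum inequality applied to the event of correct decoding
  (Fano's argument) then bounds \<open>(1 - \<epsilon>) log C\<close> by the divergence between the two laws.
  As the tests are i.i.d. and memoryless, that divergence is \<open>T\<close> times the single-letter
  divergence, which is \<open>I(X_S1; X_S2, Y)\<close>.\<close>

section \<open>Log-sum inequality and Fano's inequality\<close>

lemma ln_ge_1_minus_inverse: "0 < (x::real) \<Longrightarrow> 1 - 1 / x \<le> ln x"
  using ln_le_minus_one[of "1 / x"] by (simp add: ln_div)

lemma log_sum_inequality_point:
  fixes p r P R :: real
  assumes "0 \<le> p" "0 \<le> r" "0 < p \<longrightarrow> 0 < r" "0 < P" "0 < R"
  shows "p * ln (P / R) + p - r * P / R \<le> p * ln (p / r)"
proof (cases "p = 0")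
  case True then show ?thesis using assms by simp
next
  case False
  with assms have p: "0 < p" and r: "0 < r" by auto
  have "1 - r * P / (p * R) \<le> ln (p * R / (r * P))"
    using ln_ge_1_minus_inverse[of "p * R / (r * P)"] p r assms by simp
  also have "\<dots> = ln (p / r) - ln (P / R)"
    using p r assms by (simp add: ln_div ln_mult)
  finally have "p * (1 - r * P / (p * R)) \<le> p * (ln (p / r) - ln (P / R))"
    using p by (intro mult_left_mono) auto
  moreover have "p * (1 - r * P / (p * R)) = p - r * P / R" using p assms by (simp add: field_simps)
  ultimately show ?thesis by (simp add: algebra_simps)
qed

lemma log_sum_inequality:
  fixes p r :: "'a \<Rightarrow> real"
  assumes fin: "finite Z" and p: "\<forall>z\<in>Z. 0 \<le> p z" and r: "\<forall>z\<in>Z. 0 \<le> r z"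
    and ac: "\<forall>z\<in>Z. 0 < p z \<longrightarrow> 0 < r z"
  shows "sum p Z * log 2 (sum p Z / sum r Z) \<le> (\<Sum>z\<in>Z. p z * log 2 (p z / r z))"
proof (cases "sum p Z = 0")
  case True
  then have "\<forall>z\<in>Z. p z = 0" using sum_nonneg_eq_0_iff[OF fin, of p] p by blast
  then show ?thesis using True by simp
next
  case False
  define P where "P = sum p Z"
  define R where "R = sum r Z"
  have "P \<ge> 0" unfolding P_def using p by (simp add: sum_nonneg)
  with False have P: "0 < P" unfolding P_def by simp
  then obtain z where z: "z \<in> Z" "0 < p z"
    unfolding P_def using p by (metis less_eq_real_def sum_nonpos linorder_not_less)
  have "r z \<le> R" unfolding R_def using fin z r by (intro member_le_sum) auto
  then have R: "0 < R" using z ac by fastforce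
  have "(\<Sum>z\<in>Z. p z * ln (P / R) + p z - r z * P / R) \<le> (\<Sum>z\<in>Z. p z * ln (p z / r z))"
    using p r ac P R by (intro sum_mono log_sum_inequality_point) auto
  moreover have "(\<Sum>z\<in>Z. r z * P / R) = P"
    using R unfolding R_def by (simp add: sum_divide_distrib[symmetric] sum_distrib_right[symmetric])
  then have "(\<Sum>z\<in>Z. p z * ln (P / R) + p z - r z * P / R) = P * ln (P / R)"
    unfolding P_def by (simp add: sum.distrib sum_subtractf sum_distrib_right)
  ultimately have "P * ln (P / R) / ln 2 \<le> (\<Sum>z\<in>Z. p z * ln (p z / r z)) / ln 2"
    by (intro divide_right_mono) auto
  then show ?thesis unfolding P_def R_def log_def by (simp add: sum_divide_distrib)
qed

lemma x_ln_x_ge_neg_sqrt: "0 < (x::real) \<Longrightarrow> - 2 * sqrt x \<le> x * ln x"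
proof -
  assume x: "0 < x"
  have "1 - 1 / sqrt x \<le> ln x / 2"
    using ln_ge_1_minus_inverse[of "sqrt x"] x by (simp add: ln_sqrt)
  then have "x * (2 - 2 / sqrt x) \<le> x * ln x" using x by (intro mult_left_mono) auto
  moreover have "x * (2 / sqrt x) = 2 * sqrt x" using x
    by (metis mult.commute real_div_sqrt times_divide_eq_right less_imp_le)
  ultimately show ?thesis using x by (simp add: right_diff_distrib)
qed

lemma binary_neg_entropy_ge:
  fixes a s :: real
  assumes s: "0 \<le> s" "s < 1" and a: "1 - s\<^sup>2 \<le> a" "a \<le> 1"
  shows "- 2 * (s\<^sup>2 + 2 * s) \<le> a * log 2 a + (1 - a) * log 2 (1 - a)"
proof -
  have "s\<^sup>2 \<le> s" using mult_left_le_one_le[of s s] s by (simp add: power2_eq_square)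
  then have apos: "0 < a" using a s by linarith
  have "a * (1 - 1 / a) \<le> a * ln a"
    using ln_ge_1_minus_inverse[OF apos] apos by (intro mult_left_mono) auto
  moreover have "a * (1 - 1 / a) = a - 1" using apos by (simp add: field_simps)
  ultimately have h1: "- s\<^sup>2 \<le> a * ln a" using a by linarith
  have h2: "- 2 * s \<le> (1 - a) * ln (1 - a)"
  proof (cases "a = 1")
    case False
    then have "0 < 1 - a" using a by simp
    moreover have "sqrt (1 - a) \<le> s" using a s real_sqrt_le_mono[of "1 - a" "s\<^sup>2"] by simp
    ultimately show ?thesis using x_ln_x_ge_neg_sqrt[of "1 - a"] by linarith
  qed (use s in simp)
  have "1 / 2 \<le> ln (2::real)" using ln_ge_1_minus_inverse[of 2] by simp
  then have "(s\<^sup>2 + 2 * s) * (1 / 2) \<le> (s\<^sup>2 + 2 * s) * ln 2"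
    using s by (intro mult_left_mono) auto
  then have "- 2 * (s\<^sup>2 + 2 * s) * ln 2 \<le> - (s\<^sup>2 + 2 * s)" by (simp add: algebra_simps)
  also have "\<dots> \<le> a * ln a + (1 - a) * ln (1 - a)" using h1 h2 by linarith
  finally show ?thesis by (simp add: log_def pos_le_divide_eq add_divide_distrib flip: add_divide_distrib)
qed

text \<open>The tolerance \<open>(min \<epsilon> 1 / 9)\<^sup>2\<close> makes the binary entropy of the success
  probability, of order \<open>min \<epsilon> 1 / 9\<close>, small enough to be absorbed into \<open>\<epsilon> log C\<close>.\<close>
lemma fano_arithmetic:
  fixes J a rE rF \<epsilon> :: real and C :: nat
  assumes eps: "0 < \<epsilon>" and a: "1 - (min \<epsilon> 1 / 9)\<^sup>2 \<le> a" "a \<le> 1" and C: "1 \<le> C"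
    and J0: "0 \<le> J" and J: "a * log 2 (a / rE) + (1 - a) * log 2 ((1 - a) / rF) \<le> J"
    and rE: "0 < rE" "rE \<le> 1 / real C" and rF: "rF \<le> 1" "a < 1 \<longrightarrow> 0 < rF"
  shows "(1 - \<epsilon>) * log 2 (real C) \<le> J"
proof -
  consider "C = 1" | "1 \<le> \<epsilon>" | "2 \<le> C" "\<epsilon> < 1" using C by linarith
  then show ?thesis
  proof cases
    case 2
    then have "(1 - \<epsilon>) * log 2 (real C) \<le> 0" using C by (simp add: mult_nonpos_nonneg)
    then show ?thesis using J0 by linarith
  next
    case 3
    define s where "s = \<epsilon> / 9"
    define L where "L = log 2 (real C)"
    have s: "0 < s" "s \<le> 1/9" and as: "1 - s\<^sup>2 \<le> a" using eps a 3 unfolding s_def by auto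
    have L: "1 \<le> L" unfolding L_def using 3 by simp
    have s2: "s\<^sup>2 \<le> s" using s by (simp add: power2_eq_square mult_le_cancel_left1)
    then have apos: "0 < a" using as s by linarith
    have "a * real C \<le> a / rE" using rE apos C by (simp add: field_simps)
    then have "log 2 (a * real C) \<le> log 2 (a / rE)" using apos C by (intro log_mono) auto
    moreover have "log 2 (a * real C) = log 2 a + L" unfolding L_def using apos C by (simp add: log_mult)
    ultimately have "log 2 a + L \<le> log 2 (a / rE)" by simp
    then have t1: "a * (log 2 a + L) \<le> a * log 2 (a / rE)" using apos by (intro mult_left_mono) auto
    have t2: "(1 - a) * log 2 (1 - a) \<le> (1 - a) * log 2 ((1 - a) / rF)"
    proof (cases "a = 1")
      case False
      with a rF have "0 < 1 - a" "0 < rF" by auto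
      moreover have "(1 - a) * rF \<le> 1 - a" using mult_left_le[of rF "1 - a"] a rF by simp
      ultimately have "log 2 (1 - a) \<le> log 2 ((1 - a) / rF)" by (intro log_mono) (auto simp: le_divide_eq)
      then show ?thesis using a by (intro mult_left_mono) auto
    qed simp
    have H: "- 2 * (s\<^sup>2 + 2 * s) \<le> a * log 2 a + (1 - a) * log 2 (1 - a)"
      using binary_neg_entropy_ge[of s a] s as a by simp
    have "L * s\<^sup>2 \<le> L * s" "s \<le> L * s" using s2 L s by (auto intro: mult_left_mono)
    then have "L * s\<^sup>2 + 2 * s\<^sup>2 + 4 * s \<le> 9 * (L * s)" using s s2 by linarith
    then have "(1 - 9 * s) * L \<le> (1 - s\<^sup>2) * L - 2 * (s\<^sup>2 + 2 * s)"
      by (simp add: algebra_simps)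
    also have "\<dots> \<le> a * L + (a * log 2 a + (1 - a) * log 2 (1 - a))"
      using H as L mult_right_mono[of "1 - s\<^sup>2" a L] by linarith
    also have "\<dots> \<le> J" using t1 t2 J by (simp add: algebra_simps)
    finally show ?thesis unfolding L_def s_def by simp
  qed (use J0 in simp)
qed

lemma sum_pos_imp_ex_pos:
  fixes f :: "'a \<Rightarrow> real"
  shows "0 < sum f A \<Longrightarrow> \<exists>z\<in>A. 0 < f z"
  by (metis not_less sum_nonpos)

lemma fano_divergence_bound:
  fixes p r :: "'a \<Rightarrow> real" and C :: nat
  assumes fin: "finite Z" and p: "\<forall>z\<in>Z. 0 \<le> p z" and r: "\<forall>z\<in>Z. 0 \<le> r z"
    and ac: "\<forall>z\<in>Z. 0 < p z \<longrightarrow> 0 < r z" and psum: "sum p Z = 1" and rsum: "sum r Z = 1"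
    and eps: "0 < \<epsilon>" and C: "1 \<le> C" and E: "E \<subseteq> Z"
    and pE: "1 - (min \<epsilon> 1 / 9)\<^sup>2 \<le> sum p E" and rE: "sum r E \<le> 1 / real C"
  shows "(1 - \<epsilon>) * log 2 (real C) \<le> (\<Sum>z\<in>Z. p z * log 2 (p z / r z))"
proof (rule fano_arithmetic[OF eps pE _ C])
  let ?D = "\<lambda>A. \<Sum>z\<in>A. p z * log 2 (p z / r z)"
  have finE: "finite E" "finite (Z - E)" using fin E finite_subset by auto
  have split: "sum f Z = sum f E + sum f (Z - E)" for f :: "'a \<Rightarrow> real"
    using sum.subset_diff[OF E fin] by (simp add: add.commute)
  have pF: "sum p (Z - E) = 1 - sum p E" and rF: "sum r (Z - E) = 1 - sum r E"
    using split[of p] split[of r] psum rsum by auto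
  have nonneg: "0 \<le> sum f A" if "A \<subseteq> Z" "\<forall>z\<in>Z. 0 \<le> f z" for A and f :: "'a \<Rightarrow> real"
    using that by (intro sum_nonneg) auto
  have pos: "0 < sum r A" if A: "A \<subseteq> Z" and pA: "0 < sum p A" for A
  proof -
    obtain z where "z \<in> A" "0 < p z" using sum_pos_imp_ex_pos[OF pA] by blast
    then have "r z \<le> sum r A" "0 < r z" using A fin ac r finite_subset[OF A]
      by (auto intro!: member_le_sum)
    then show ?thesis by simp
  qed
  show "sum p E \<le> 1" using pF nonneg[of "Z - E" p] p by simp
  show "0 \<le> ?D Z" using log_sum_inequality[OF fin p r ac] psum rsum by simp
  have "sum p E * log 2 (sum p E / sum r E) + sum p (Z - E) * log 2 (sum p (Z - E) / sum r (Z - E))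
      \<le> ?D E + ?D (Z - E)"
    using p r ac E by (intro add_mono log_sum_inequality finE) auto
  then show "sum p E * log 2 (sum p E / sum r E) + (1 - sum p E) * log 2 ((1 - sum p E) / sum r (Z - E))
      \<le> ?D Z" using split[of "\<lambda>z. p z * log 2 (p z / r z)"] pF by simp
  have "min \<epsilon> 1 / 9 < 1" by linarith
  then have "(min \<epsilon> 1 / 9)\<^sup>2 < 1" using eps by (simp add: power_less_one_iff abs_less_iff)
  then have "0 < sum p E" using pE by linarith
  then show "0 < sum r E" using pos E by blast
  show "sum r E \<le> 1 / real C" by (fact rE)
  show "sum r (Z - E) \<le> 1" using rF nonneg[OF E r] by simp
  show "sum p E < 1 \<longrightarrow> 0 < sum r (Z - E)" using pos[of "Z - E"] pF by auto
qed

section \<open>Product laws and the marginal channel\<close>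

lemma sum_PiE_fixing_prod:
  fixes g :: "'a \<Rightarrow> bool \<Rightarrow> real"
  assumes "finite I" "J \<subseteq> I" "\<And>i. i \<in> I - J \<Longrightarrow> g i True + g i False = 1"
  shows "(\<Sum>c\<in>{c \<in> PiE I (\<lambda>_. UNIV). \<forall>j\<in>J. c j = u j}. \<Prod>i\<in>I. g i (c i)) = (\<Prod>j\<in>J. g j (u j))"
proof -
  have "{c \<in> PiE I (\<lambda>_. UNIV). \<forall>j\<in>J. c j = u j} = PiE I (\<lambda>i. if i \<in> J then {u i} else UNIV)"
    using assms(2) by (auto simp: PiE_def Pi_def extensional_def split: if_splits)
  then have "(\<Sum>c\<in>{c \<in> PiE I (\<lambda>_. UNIV). \<forall>j\<in>J. c j = u j}. \<Prod>i\<in>I. g i (c i))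
      = (\<Prod>i\<in>I. \<Sum>y\<in>(if i \<in> J then {u i} else UNIV). g i y)"
    using assms(1) by (simp add: prod_sum_PiE)
  also have "\<dots> = (\<Prod>i\<in>I. if i \<in> J then g i (u i) else 1)"
    using assms(3) by (intro prod.cong) (auto simp: UNIV_bool add.commute)
  also have "\<dots> = (\<Prod>j\<in>J. g j (u j))"
    using assms by (simp add: prod.If_cases Int_absorb1)
  finally show ?thesis .
qed

lemma sum_PiE_prod_eq_1:
  fixes g :: "'a \<Rightarrow> bool \<Rightarrow> real"
  assumes "finite I" "\<And>i. i \<in> I \<Longrightarrow> g i True + g i False = 1"
  shows "(\<Sum>c\<in>PiE I (\<lambda>_. UNIV). \<Prod>i\<in>I. g i (c i)) = 1"
  using sum_PiE_fixing_prod[OF assms(1) empty_subsetI, of g undefined] assms(2) by simp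

definition bern_prod :: "real \<Rightarrow> nat set \<Rightarrow> (nat \<Rightarrow> bool) \<Rightarrow> real" where
  "bern_prod q A u = (\<Prod>k\<in>A. bern q (u k))"

text \<open>The channel \<open>p(y | x_S2)\<close>: the inputs at the positions \<open>A\<close> of \<open>S1\<close> are averaged out under \<open>Q\<close>.\<close>
definition marginal_channel ::
    "nat \<Rightarrow> real \<Rightarrow> ((nat \<Rightarrow> bool) \<Rightarrow> bool \<Rightarrow> real) \<Rightarrow> nat set \<Rightarrow> (nat \<Rightarrow> bool) \<Rightarrow> bool \<Rightarrow> real" where
  "marginal_channel K q W A u y =
     (\<Sum>v\<in>{v \<in> PiE {0..<K} (\<lambda>_. UNIV). \<forall>k\<in>{0..<K} - A. v k = u k}. bern_prod q A v * W v y)"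

lemma bern_sum_eq_1: "bern q True + bern q False = 1"
  by (simp add: bern_def)

lemma bern_nonneg: "0 \<le> q \<Longrightarrow> q \<le> 1 \<Longrightarrow> 0 \<le> bern q b"
  by (simp add: bern_def)

lemma bern_prod_nonneg: "0 \<le> q \<Longrightarrow> q \<le> 1 \<Longrightarrow> 0 \<le> bern_prod q A u"
  unfolding bern_prod_def by (intro prod_nonneg) (simp add: bern_nonneg)

lemma bern_prod_split:
  "A \<subseteq> {0..<K} \<Longrightarrow> bern_prod q {0..<K} u = bern_prod q A u * bern_prod q ({0..<K} - A) u"
  unfolding bern_prod_def by (subst prod.subset_diff[of A "{0..<K}"]) (auto simp: mult.commute)

lemma bern_prod_cong: "\<forall>k\<in>A. u k = v k \<Longrightarrow> bern_prod q A u = bern_prod q A v"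
  unfolding bern_prod_def by (intro prod.cong) auto

lemma marginal_channel_cong:
  "\<forall>k\<in>{0..<K} - A. u k = v k \<Longrightarrow> marginal_channel K q W A u y = marginal_channel K q W A v y"
  unfolding marginal_channel_def by (intro sum.cong) auto

lemma marginal_channel_nonneg:
  "valid_channel K W \<Longrightarrow> 0 \<le> q \<Longrightarrow> q \<le> 1 \<Longrightarrow> 0 \<le> marginal_channel K q W A u y"
  unfolding marginal_channel_def valid_channel_def
  by (intro sum_nonneg mult_nonneg_nonneg bern_prod_nonneg) auto

lemma marginal_channel_ge:
  assumes "valid_channel K W" "0 \<le> q" "q \<le> 1" "u \<in> PiE {0..<K} (\<lambda>_. UNIV)"
  shows "bern_prod q A u * W u y \<le> marginal_channel K q W A u y"
  unfolding marginal_channel_def using assms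
  by (intro member_le_sum[where f = "\<lambda>v. bern_prod q A v * W v y"])
     (auto simp: finite_PiE valid_channel_def bern_prod_nonneg)

lemma marginal_channel_sum_eq_1:
  assumes vc: "valid_channel K W" and A: "A \<subseteq> {0..<K}"
  shows "marginal_channel K q W A u True + marginal_channel K q W A u False = 1"
proof -
  have "marginal_channel K q W A u True + marginal_channel K q W A u False =
      (\<Sum>v\<in>{v \<in> PiE {0..<K} (\<lambda>_. UNIV). \<forall>k\<in>{0..<K} - A. v k = u k}.
         \<Prod>k\<in>{0..<K}. if k \<in> A then bern q (v k) else 1)"
    using vc A unfolding marginal_channel_def valid_channel_def bern_prod_def
    by (simp add: prod.If_cases Int_absorb1 flip: sum.distrib distrib_left)
  also have "\<dots> = 1"
    by (subst sum_PiE_fixing_prod) (auto simp: bern_sum_eq_1)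
  finally show ?thesis .
qed

lemma sum_letter_agreeing_on:
  assumes A: "A \<subseteq> {0..<K}" and Ws: "\<forall>v. W v True + W v False = 1"
  shows "(\<Sum>(v, y)\<in>{v \<in> PiE {0..<K} (\<lambda>_. UNIV). \<forall>k\<in>A. v k = u k} \<times> UNIV.
            bern_prod q {0..<K} v * W v y) = bern_prod q A u"
proof -
  have "(\<Sum>(v, y)\<in>{v \<in> PiE {0..<K} (\<lambda>_. UNIV). \<forall>k\<in>A. v k = u k} \<times> UNIV.
            bern_prod q {0..<K} v * W v y)
      = (\<Sum>v\<in>{v \<in> PiE {0..<K} (\<lambda>_. UNIV). \<forall>k\<in>A. v k = u k}. \<Prod>k\<in>{0..<K}. bern q (v k))"
    using Ws by (simp add: sum.cartesian_product[symmetric] UNIV_bool bern_prod_def add.commute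
        flip: distrib_left)
  also have "\<dots> = bern_prod q A u"
    unfolding bern_prod_def using A by (intro sum_PiE_fixing_prod) (auto simp: bern_sum_eq_1)
  finally show ?thesis .
qed

lemma sum_letter_agreeing_off:
  assumes A: "A \<subseteq> {0..<K}"
  shows "(\<Sum>(v, y)\<in>{v \<in> PiE {0..<K} (\<lambda>_. UNIV). \<forall>k\<in>{0..<K} - A. v k = u k} \<times> {b}.
            bern_prod q {0..<K} v * W v y)
       = bern_prod q ({0..<K} - A) u * marginal_channel K q W A u b"
proof -
  have "bern_prod q {0..<K} v = bern_prod q ({0..<K} - A) u * bern_prod q A v"
    if "\<forall>k\<in>{0..<K} - A. v k = u k" for v
    using bern_prod_split[OF A, of q v] bern_prod_cong[OF that, of q] by simp
  then show ?thesis
    unfolding marginal_channel_def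
    by (simp add: sum.cartesian_product[symmetric] sum_distrib_left mult.assoc)
qed

lemma single_letter_mi_eq_divergence:
  assumes A: "A \<subseteq> {0..<K}" and vc: "valid_channel K W"
  shows "single_letter_mi K q W A =
     (\<Sum>u\<in>PiE {0..<K} (\<lambda>_. UNIV). \<Sum>y\<in>UNIV.
        bern_prod q {0..<K} u * W u y * log 2 (W u y / marginal_channel K q W A u y))"
proof -
  define U where "U = PiE {0..<K} (\<lambda>_. UNIV :: bool set)"
  define p where "p = (\<lambda>(u, y). bern_prod q {0..<K} u * W u y)"
  define f where "f = (\<lambda>(u :: nat \<Rightarrow> bool, y :: bool). restrict u A)"
  define g where "g = (\<lambda>(u :: nat \<Rightarrow> bool, y :: bool). (restrict u ({0..<K} - A), y))"
  have Ws: "\<forall>v. W v True + W v False = 1" using vc by (simp add: valid_channel_def)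
  have agree: "(\<forall>k\<in>{0..<K}. v k = u k) \<longleftrightarrow> v = u" if "u \<in> U" "v \<in> U" for u v
    using that unfolding U_def by (auto simp: PiE_def extensional_def fun_eq_iff)
  have restrict_eq: "restrict v B = restrict u B \<longleftrightarrow> (\<forall>k\<in>B. v k = u k)" for u v :: "nat \<Rightarrow> bool" and B
    by (auto simp: fun_eq_iff restrict_def)
  have cell: "(if p (u, y) = 0 then 0 else p (u, y) * log 2
        ((\<Sum>z\<in>{z \<in> U \<times> UNIV. f z = f (u, y) \<and> g z = g (u, y)}. p z) /
         ((\<Sum>z\<in>{z \<in> U \<times> UNIV. f z = f (u, y)}. p z) * (\<Sum>z\<in>{z \<in> U \<times> UNIV. g z = g (u, y)}. p z))))
      = bern_prod q {0..<K} u * W u y * log 2 (W u y / marginal_channel K q W A u y)"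
    if u: "u \<in> U" for u y
  proof (cases "p (u, y) = 0")
    case False
    have joint: "{z \<in> U \<times> UNIV. f z = f (u, y) \<and> g z = g (u, y)} = {(u, y)}"
      using u A agree by (auto simp: f_def g_def restrict_eq) blast
    have first: "{z \<in> U \<times> UNIV. f z = f (u, y)} = {v \<in> U. \<forall>k\<in>A. v k = u k} \<times> UNIV"
      by (auto simp: f_def restrict_eq)
    have second: "{z \<in> U \<times> UNIV. g z = g (u, y)} = {v \<in> U. \<forall>k\<in>{0..<K} - A. v k = u k} \<times> {y}"
      by (auto simp: g_def restrict_eq)
    have "bern_prod q A u \<noteq> 0" "bern_prod q ({0..<K} - A) u \<noteq> 0"
      using False bern_prod_split[OF A, of q u] by (auto simp: p_def)
    then show ?thesis
      using False unfolding joint first second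
      using sum_letter_agreeing_on[OF A Ws, of q u] sum_letter_agreeing_off[OF A, of q W u y]
      by (simp add: U_def p_def bern_prod_split[OF A])
  qed (simp add: p_def)
  have "(\<lambda>(u, y). (\<Prod>k<K. bern q (u k)) * W u y) = p"
    unfolding p_def bern_prod_def by (simp add: lessThan_atLeast0)
  then have "single_letter_mi K q W A = mutual_info (U \<times> UNIV) p f g"
    unfolding single_letter_mi_def f_def g_def U_def by simp
  also have "\<dots> = (\<Sum>(u, y)\<in>U \<times> UNIV.
      bern_prod q {0..<K} u * W u y * log 2 (W u y / marginal_channel K q W A u y))"
    unfolding mutual_info_def
  proof (intro sum.cong refl, goal_cases)
    case (1 z)
    then show ?case by (cases z) (simp only: mem_Sigma_iff prod.case, rule cell, blast)
  qed
  finally show ?thesis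
    unfolding U_def by (simp add: sum.cartesian_product)
qed

section \<open>Invariance under permutations of the defective items\<close>

lemma sum_filter_reindex_bij:
  fixes p :: "'z \<Rightarrow> 'b::comm_monoid_add"
  assumes "finite Zs" "bij_betw h Zs Zs"
  shows "(\<Sum>z\<in>{z \<in> Zs. P z}. p z) = (\<Sum>z\<in>{z \<in> Zs. P (h z)}. p (h z))"
  using assms sum.reindex_bij_betw[OF assms(2), of "\<lambda>z. if P z then p z else 0"]
  by (simp add: sum.inter_filter)

lemma sum_cell_bij_eq:
  fixes p :: "'z \<Rightarrow> real"
  assumes fin: "finite Zs" and h: "bij_betw h Zs Zs" and ph: "\<forall>z\<in>Zs. p (h z) = p z"
    and hF: "\<forall>z1\<in>Zs. \<forall>z2\<in>Zs. F (h z1) = F (h z2) \<longleftrightarrow> F' z1 = F' z2" and z: "z \<in> Zs"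
  shows "(\<Sum>z'\<in>{z' \<in> Zs. F z' = F (h z)}. p z') = (\<Sum>z'\<in>{z' \<in> Zs. F' z' = F' z}. p z')"
  using hF ph z by (subst sum_filter_reindex_bij[OF fin h]) (auto intro!: sum.cong)

lemma mutual_info_bij_eq:
  fixes p :: "'z \<Rightarrow> real"
  assumes fin: "finite Zs" and h: "bij_betw h Zs Zs" and ph: "\<forall>z\<in>Zs. p (h z) = p z"
    and hf: "\<forall>z1\<in>Zs. \<forall>z2\<in>Zs. f (h z1) = f (h z2) \<longleftrightarrow> f' z1 = f' z2"
    and hg: "\<forall>z1\<in>Zs. \<forall>z2\<in>Zs. g (h z1) = g (h z2) \<longleftrightarrow> g' z1 = g' z2"
  shows "mutual_info Zs p f g = mutual_info Zs p f' g'"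
proof -
  have hfg: "\<forall>z1\<in>Zs. \<forall>z2\<in>Zs. (f (h z1), g (h z1)) = (f (h z2), g (h z2)) \<longleftrightarrow>
      (f' z1, g' z1) = (f' z2, g' z2)" using hf hg by simp
  show ?thesis
    unfolding mutual_info_def
    using sum_cell_bij_eq[OF fin h ph hf] sum_cell_bij_eq[OF fin h ph hg]
      sum_cell_bij_eq[OF fin h ph hfg] ph h
    by (subst sum.reindex_bij_betw[OF h, symmetric]) (auto intro!: sum.cong simp: bij_betw_def)
qed

lemma exists_perm_extending:
  assumes g: "bij_betw g (I - A) (I - B)" and AB: "A \<subseteq> I" "B \<subseteq> I" "finite I" "card A = card B"
  shows "\<exists>\<pi>. bij_betw \<pi> I I \<and> \<pi> ` A = B \<and> (\<forall>k\<in>I - A. \<pi> k = g k)"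
proof -
  obtain f where f: "bij_betw f A B"
    using finite_same_card_bij[OF _ _ AB(4)] AB(1,2,3) finite_subset by blast
  define \<pi> where "\<pi> = (\<lambda>k. if k \<in> A then f k else g k)"
  have "bij_betw \<pi> A B" using f unfolding \<pi>_def by (rule bij_betw_cong[THEN iffD1, rotated]) auto
  moreover have "bij_betw \<pi> (I - A) (I - B)" using g unfolding \<pi>_def
    by (rule bij_betw_cong[THEN iffD1, rotated]) auto
  ultimately have "bij_betw \<pi> (A \<union> (I - A)) (B \<union> (I - B))"
    by (intro bij_betw_combine) auto
  moreover have "A \<union> (I - A) = I" "B \<union> (I - B) = I" using AB by auto
  ultimately have "bij_betw \<pi> I I" by simp
  moreover have "\<pi> ` A = B" using \<open>bij_betw \<pi> A B\<close> by (simp add: bij_betw_def)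
  moreover have "\<forall>k\<in>I - A. \<pi> k = g k" unfolding \<pi>_def by simp
  ultimately show ?thesis by blast
qed

lemma bij_betw_restrict_comp_PiE:
  assumes pi: "bij_betw \<pi> I I"
  shows "bij_betw (\<lambda>u. restrict (u \<circ> \<pi>) I) (PiE I (\<lambda>_. UNIV :: 'b set)) (PiE I (\<lambda>_. UNIV))"
proof (rule bij_betw_byWitness[where f' = "\<lambda>u. restrict (u \<circ> the_inv_into I \<pi>) I"])
  have "\<pi> (the_inv_into I \<pi> k) = k" "the_inv_into I \<pi> k \<in> I" "the_inv_into I \<pi> (\<pi> k) = k" "\<pi> k \<in> I"
    if "k \<in> I" for k
    using that pi bij_betw_the_inv_into[OF pi]
    by (auto simp: f_the_inv_into_f_bij_betw bij_betw_def the_inv_into_f_f)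
  then show "\<forall>u\<in>PiE I (\<lambda>_. UNIV). restrict (restrict (u \<circ> \<pi>) I \<circ> the_inv_into I \<pi>) I = u"
    "\<forall>u\<in>PiE I (\<lambda>_. UNIV). restrict (restrict (u \<circ> the_inv_into I \<pi>) I \<circ> \<pi>) I = u"
    by (auto simp: fun_eq_iff PiE_def extensional_def restrict_def)
qed auto

lemma restrict_comp_eq_iff:
  "restrict (u \<circ> \<pi>) C = restrict (v \<circ> \<pi>) C \<longleftrightarrow> restrict u (\<pi> ` C) = restrict v (\<pi> ` C)"
  by (auto simp: fun_eq_iff restrict_def)

lemma bern_prod_comp_bij: "bij_betw \<pi> A B \<Longrightarrow> bern_prod q A (u \<circ> \<pi>) = bern_prod q B u"
  unfolding bern_prod_def using prod.reindex_bij_betw[of \<pi> A B "\<lambda>k. bern q (u k)"] by simp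

lemma valid_channel_perm:
  assumes "valid_channel K W" "bij_betw \<pi> {0..<K} {0..<K}" "u \<in> PiE {0..<K} (\<lambda>_. UNIV)"
  shows "W (restrict (u \<circ> \<pi>) {0..<K}) y = W u y"
  using assms PiE_restrict[OF assms(3)] unfolding valid_channel_def by metis

lemma single_letter_mi_card_eq:
  assumes vc: "valid_channel K W" and A: "A \<subseteq> {0..<K}" and B: "B \<subseteq> {0..<K}"
    and card: "card A = card B"
  shows "single_letter_mi K q W A = single_letter_mi K q W B"
proof -
  have "finite A" "finite B" using A B finite_subset by auto
  then have card_compl: "card ({0..<K} - A) = card ({0..<K} - B)"
    using A B card by (simp add: card_Diff_subset)
  obtain g where g: "bij_betw g ({0..<K} - A) ({0..<K} - B)"
    using finite_same_card_bij[OF _ _ card_compl] by auto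
  obtain \<pi> where pi: "bij_betw \<pi> {0..<K} {0..<K}" "\<pi> ` A = B"
    using exists_perm_extending[OF g A B _ card] by auto
  have "inj_on \<pi> {0..<K}" "\<pi> ` {0..<K} = {0..<K}" using pi(1) by (auto simp: bij_betw_def)
  then have compl: "\<pi> ` ({0..<K} - A) = {0..<K} - B"
    using inj_on_image_set_diff[of \<pi> "{0..<K}" "{0..<K}" A] A pi(2) by auto
  define U where "U = PiE {0..<K} (\<lambda>_. UNIV :: bool set)"
  define h where "h = map_prod (\<lambda>u :: nat \<Rightarrow> bool. restrict (u \<circ> \<pi>) {0..<K}) (id :: bool \<Rightarrow> bool)"
  have hb: "bij_betw h (U \<times> UNIV) (U \<times> UNIV)"
    unfolding h_def U_def by (intro bij_betw_map_prod bij_betw_restrict_comp_PiE pi) auto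
  have "(\<Prod>k<K. bern q (restrict (u \<circ> \<pi>) {0..<K} k)) = (\<Prod>k<K. bern q (u k))" for u
    using bern_prod_comp_bij[OF pi(1), of q u] by (simp add: bern_prod_def lessThan_atLeast0)
  then have ph: "\<forall>z\<in>U \<times> UNIV. (\<lambda>(u, y). (\<Prod>k<K. bern q (u k)) * W u y) (h z)
      = (\<lambda>(u, y). (\<Prod>k<K. bern q (u k)) * W u y) z"
    using valid_channel_perm[OF vc pi(1)] by (auto simp: h_def U_def)
  show ?thesis
    unfolding single_letter_mi_def U_def[symmetric]
  proof (rule mutual_info_bij_eq[OF _ hb ph])
    show "finite (U \<times> (UNIV :: bool set))" unfolding U_def by (simp add: finite_PiE)
    show "\<forall>z1\<in>U \<times> UNIV. \<forall>z2\<in>U \<times> UNIV. (\<lambda>(u, y). restrict u A) (h z1) = (\<lambda>(u, y). restrict u A) (h z2)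
        \<longleftrightarrow> (\<lambda>(u, y). restrict u B) z1 = (\<lambda>(u, y). restrict u B) z2"
      using A pi(2) by (clarsimp simp: h_def restrict_comp_eq_iff Int_absorb1)
    show "\<forall>z1\<in>U \<times> UNIV. \<forall>z2\<in>U \<times> UNIV.
        (\<lambda>(u, y). (restrict u ({0..<K} - A), y)) (h z1) = (\<lambda>(u, y). (restrict u ({0..<K} - A), y)) (h z2)
        \<longleftrightarrow> (\<lambda>(u, y). (restrict u ({0..<K} - B), y)) z1 = (\<lambda>(u, y). (restrict u ({0..<K} - B), y)) z2"
      using compl by (clarsimp simp: h_def restrict_comp_eq_iff Int_absorb1)
  qed
qed

lemma marginal_channel_comp_perm:
  assumes vc: "valid_channel K W" and pi: "bij_betw \<pi> {0..<K} {0..<K}" "\<pi> ` A = B"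
    and A: "A \<subseteq> {0..<K}"
  shows "marginal_channel K q W A (u \<circ> \<pi>) y = marginal_channel K q W B u y"
proof -
  define U where "U = PiE {0..<K} (\<lambda>_. UNIV :: bool set)"
  define H where "H = (\<lambda>v :: nat \<Rightarrow> bool. restrict (v \<circ> \<pi>) {0..<K})"
  have HU: "bij_betw H U U" unfolding H_def U_def by (rule bij_betw_restrict_comp_PiE[OF pi(1)])
  have "inj_on \<pi> {0..<K}" "\<pi> ` {0..<K} = {0..<K}" using pi(1) by (auto simp: bij_betw_def)
  then have compl: "\<pi> ` ({0..<K} - A) = {0..<K} - B"
    using inj_on_image_set_diff[of \<pi> "{0..<K}" "{0..<K}" A] A pi(2) by auto
  have piAB: "bij_betw \<pi> A B" using bij_betw_subset[OF pi(1) A pi(2)] .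
  have cond: "(\<forall>k\<in>{0..<K} - A. H w k = u (\<pi> k)) \<longleftrightarrow> (\<forall>j\<in>{0..<K} - B. w j = u j)" for w
  proof -
    have "(\<forall>k\<in>{0..<K} - A. H w k = u (\<pi> k)) \<longleftrightarrow> (\<forall>k\<in>{0..<K} - A. w (\<pi> k) = u (\<pi> k))"
      by (simp add: H_def)
    also have "\<dots> \<longleftrightarrow> (\<forall>j\<in>{0..<K} - B. w j = u j)" unfolding compl[symmetric] by blast
    finally show ?thesis .
  qed
  have "marginal_channel K q W A (u \<circ> \<pi>) y =
      (\<Sum>v\<in>{v \<in> U. \<forall>k\<in>{0..<K} - A. v k = u (\<pi> k)}. bern_prod q A v * W v y)"
    unfolding marginal_channel_def U_def by simp
  also have "\<dots> = (\<Sum>w\<in>{w \<in> U. \<forall>k\<in>{0..<K} - A. H w k = u (\<pi> k)}. bern_prod q A (H w) * W (H w) y)"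
    by (rule sum_filter_reindex_bij[OF _ HU]) (simp add: U_def finite_PiE)
  also have "\<dots> = (\<Sum>w\<in>{w \<in> U. \<forall>j\<in>{0..<K} - B. w j = u j}. bern_prod q B w * W w y)"
  proof (rule sum.cong)
    fix w assume "w \<in> {w \<in> U. \<forall>j\<in>{0..<K} - B. w j = u j}"
    then have w: "w \<in> U" by simp
    have "bern_prod q A (H w) = bern_prod q A (w \<circ> \<pi>)"
      using A by (intro bern_prod_cong) (auto simp: H_def)
    also have "\<dots> = bern_prod q B w" by (rule bern_prod_comp_bij[OF piAB])
    finally show "bern_prod q A (H w) * W (H w) y = bern_prod q B w * W w y"
      using valid_channel_perm[OF vc pi(1)] w by (simp add: H_def U_def)
  qed (use cond in blast)
  also have "\<dots> = marginal_channel K q W B u y"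
    unfolding marginal_channel_def U_def by simp
  finally show ?thesis .
qed

lemma bij_betw_sorted_nth:
  "finite S \<Longrightarrow> card S = K \<Longrightarrow> bij_betw (\<lambda>k. sorted_list_of_set S ! k) {0..<K} S"
  using bij_betw_nth[of "sorted_list_of_set S" "{0..<K}" S] by (simp add: lessThan_atLeast0)

lemma bij_betw_preimage:
  assumes "bij_betw f X Y" "Z \<subseteq> Y"
  shows "bij_betw f {x \<in> X. f x \<in> Z} Z"
  using assms by (intro bij_betw_subset[OF assms(1)]) (auto simp: bij_betw_def image_iff)

lemma positions_subset: "positions K S S1 \<subseteq> {0..<K}"
  unfolding positions_def by auto

lemma card_positions:
  "finite S \<Longrightarrow> card S = K \<Longrightarrow> S1 \<subseteq> S \<Longrightarrow> card (positions K S S1) = card S1"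
  unfolding positions_def by (rule bij_betw_same_card[OF bij_betw_preimage[OF bij_betw_sorted_nth]])

text \<open>This is where the symmetry of the channel enters: given the entries of the items of
  \<open>s2\<close>, the law of an outcome does not depend on the other defective items.\<close>
lemma marginal_channel_test_input_eq:
  assumes vc: "valid_channel K W"
    and S: "finite S" "card S = K" "s2 \<subseteq> S" and S': "finite S'" "card S' = K" "s2 \<subseteq> S'"
  shows "marginal_channel K q W (positions K S (S - s2)) (test_input K S X t) y =
         marginal_channel K q W (positions K S' (S' - s2)) (test_input K S' X t) y"
proof -
  define n where "n = (\<lambda>k. sorted_list_of_set S ! k)"
  define n' where "n' = (\<lambda>k. sorted_list_of_set S' ! k)"
  define A where "A = positions K S (S - s2)"
  define A' where "A' = positions K S' (S' - s2)"
  have bn: "bij_betw n {0..<K} S" and bn': "bij_betw n' {0..<K} S'"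
    unfolding n_def n'_def using bij_betw_sorted_nth S S' by auto
  have compl: "{0..<K} - A = {k \<in> {0..<K}. n k \<in> s2}" "{0..<K} - A' = {k \<in> {0..<K}. n' k \<in> s2}"
    using bn bn' unfolding A_def A'_def positions_def n_def n'_def by (auto simp: bij_betw_def)
  have cA: "bij_betw n ({0..<K} - A) s2"
    unfolding compl(1) by (rule bij_betw_preimage[OF bn S(3)])
  have cA': "bij_betw n' ({0..<K} - A') s2"
    unfolding compl(2) by (rule bij_betw_preimage[OF bn' S'(3)])
  have "card A = card A'"
    using card_positions[of S K "S - s2"] card_positions[of S' K "S' - s2"] S S'
    by (simp add: A_def A'_def card_Diff_subset finite_subset)
  moreover have "A \<subseteq> {0..<K}" "A' \<subseteq> {0..<K}" unfolding A_def A'_def by (fact positions_subset)+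
  moreover have "bij_betw (the_inv_into ({0..<K} - A') n' \<circ> n) ({0..<K} - A) ({0..<K} - A')"
    using cA bij_betw_the_inv_into[OF cA'] by (rule bij_betw_trans)
  ultimately obtain \<pi> where pi: "bij_betw \<pi> {0..<K} {0..<K}" "\<pi> ` A = A'"
    and match: "\<forall>k\<in>{0..<K} - A. \<pi> k = the_inv_into ({0..<K} - A') n' (n k)"
    using exists_perm_extending[of _ "{0..<K}" A A'] by (metis comp_apply finite_atLeastLessThan)
  have "n' (\<pi> k) = n k" if "k \<in> {0..<K} - A" for k
    using match that cA cA' by (simp add: f_the_inv_into_f_bij_betw bij_betw_apply)
  moreover have "\<pi> k \<in> {0..<K}" if "k \<in> {0..<K}" for k using bij_betw_apply[OF pi(1) that] .
  ultimately have "\<forall>k\<in>{0..<K} - A. test_input K S X t k = (test_input K S' X t \<circ> \<pi>) k"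
    by (auto simp: test_input_def n_def n'_def)
  then have "marginal_channel K q W A (test_input K S X t) y =
      marginal_channel K q W A (test_input K S' X t \<circ> \<pi>) y"
    by (rule marginal_channel_cong)
  also have "\<dots> = marginal_channel K q W A' (test_input K S' X t) y"
    by (rule marginal_channel_comp_perm[OF vc pi \<open>A \<subseteq> {0..<K}\<close>])
  finally show ?thesis unfolding A_def A'_def .
qed

section \<open>Tensorization over the tests\<close>

lemma sum_outcomes_prod_eq_1:
  fixes f :: "nat \<Rightarrow> bool \<Rightarrow> real"
  assumes "\<And>t. t < T \<Longrightarrow> f t True + f t False = 1"
  shows "(\<Sum>Y\<in>outcomes T. \<Prod>t<T. f t (Y t)) = 1"
  unfolding outcomes_def lessThan_atLeast0 using assms by (intro sum_PiE_prod_eq_1) auto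

lemma sum_outcomes_prod_mult_coord:
  fixes f :: "nat \<Rightarrow> bool \<Rightarrow> real"
  assumes f: "\<And>t. t < T \<Longrightarrow> f t True + f t False = 1" and s: "s < T"
  shows "(\<Sum>Y\<in>outcomes T. (\<Prod>t<T. f t (Y t)) * l (Y s)) = (\<Sum>b\<in>UNIV. f s b * l b)"
proof -
  define g where "g = (\<lambda>t b. f t b * (if t = s then l b else 1))"
  have "(\<Prod>t<T. f t (Y t)) * l (Y s) = (\<Prod>t\<in>{0..<T}. g t (Y t))" for Y
    using s by (simp add: g_def prod.distrib lessThan_atLeast0 prod.delta)
  then have "(\<Sum>Y\<in>outcomes T. (\<Prod>t<T. f t (Y t)) * l (Y s)) = (\<Prod>t\<in>{0..<T}. \<Sum>b\<in>UNIV. g t b)"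
    unfolding outcomes_def by (simp add: prod_sum_PiE)
  also have "\<dots> = (\<Sum>b\<in>UNIV. g s b) * (\<Prod>t\<in>{0..<T} - {s}. \<Sum>b\<in>UNIV. g t b)"
    using s by (subst prod.remove[of _ s]) auto
  also have "(\<Prod>t\<in>{0..<T} - {s}. \<Sum>b\<in>UNIV. g t b) = 1"
    using f unfolding g_def by (intro prod.neutral) (auto simp: UNIV_bool add.commute)
  finally show ?thesis unfolding g_def by simp
qed

lemma sum_outcomes_prod_mult_sum:
  fixes f :: "nat \<Rightarrow> bool \<Rightarrow> real"
  assumes "\<And>t. t < T \<Longrightarrow> f t True + f t False = 1"
  shows "(\<Sum>Y\<in>outcomes T. (\<Prod>t<T. f t (Y t)) * (\<Sum>s<T. l s (Y s))) = (\<Sum>s<T. \<Sum>b\<in>UNIV. f s b * l s b)"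
proof -
  have "(\<Sum>Y\<in>outcomes T. (\<Prod>t<T. f t (Y t)) * (\<Sum>s<T. l s (Y s)))
      = (\<Sum>s<T. \<Sum>Y\<in>outcomes T. (\<Prod>t<T. f t (Y t)) * l s (Y s))"
    by (simp add: sum_distrib_left sum.swap[of _ "outcomes T"])
  also have "\<dots> = (\<Sum>s<T. \<Sum>b\<in>UNIV. f s b * l s b)"
    using assms by (intro sum.cong refl sum_outcomes_prod_mult_coord) auto
  finally show ?thesis .
qed

lemma design_prob_nonneg: "0 \<le> q \<Longrightarrow> q \<le> 1 \<Longrightarrow> 0 \<le> design_prob q N T X"
  unfolding design_prob_def by (intro prod_nonneg) (simp add: bern_nonneg)

lemma chan_prob_nonneg: "(\<And>u y. 0 \<le> W u y) \<Longrightarrow> 0 \<le> chan_prob K W S X T Y"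
  unfolding chan_prob_def by (intro prod_nonneg) auto

lemma design_prob_sum_eq_1: "(\<Sum>X\<in>designs N T. design_prob q N T X) = 1"
  unfolding designs_def design_prob_def by (intro sum_PiE_prod_eq_1) (auto simp: bern_sum_eq_1)

lemma chan_prob_sum_eq_1:
  assumes "\<And>u. W u True + W u False = 1"
  shows "(\<Sum>X\<in>designs N T. \<Sum>Y\<in>outcomes T. design_prob q N T X * chan_prob K W S X T Y) = 1"
proof -
  have "(\<Sum>Y\<in>outcomes T. chan_prob K W S X T Y) = 1" for X
    unfolding chan_prob_def by (rule sum_outcomes_prod_eq_1) (simp add: assms)
  then show ?thesis by (simp add: sum_distrib_left[symmetric] design_prob_sum_eq_1)
qed

lemma sum_design_test_input:
  fixes G :: "(nat \<Rightarrow> bool) \<Rightarrow> real"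
  assumes S: "S \<subseteq> {0..<N}" "card S = K" and s: "s < T"
  shows "(\<Sum>X\<in>designs N T. design_prob q N T X * G (test_input K S X s)) =
         (\<Sum>u\<in>PiE {0..<K} (\<lambda>_. UNIV). bern_prod q {0..<K} u * G u)"
proof -
  define n where "n = (\<lambda>k. sorted_list_of_set S ! k)"
  have bn: "bij_betw n {0..<K} S"
    unfolding n_def using S finite_subset by (intro bij_betw_sorted_nth) auto
  define U where "U = PiE {0..<K} (\<lambda>_. UNIV :: bool set)"
  define grid where "grid = {0..<N} \<times> {0..<T}"
  define J where "J = (\<lambda>k. (n k, s)) ` {0..<K}"
  define idx where "idx = the_inv_into {0..<K} n"
  have JG: "J \<subseteq> grid" unfolding J_def grid_def using bn S s by (auto simp: bij_betw_def)
  have injJ: "inj_on (\<lambda>k. (n k, s)) {0..<K}" using bn by (auto simp: bij_betw_def inj_on_def)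
  have idx: "idx (n k) = k" if "k \<in> {0..<K}" for k
    unfolding idx_def using bn that by (simp add: bij_betw_def the_inv_into_f_f)
  have fiber: "(\<Sum>X\<in>{X \<in> designs N T. test_input K S X s = u}. design_prob q N T X) = bern_prod q {0..<K} u"
    if u: "u \<in> U" for u
  proof -
    have "test_input K S X s = u \<longleftrightarrow> (\<forall>p\<in>J. X p = u (idx (fst p)))" for X
      using u idx unfolding test_input_def U_def J_def n_def
      by (auto simp: fun_eq_iff restrict_def PiE_def extensional_def)
    then have "(\<Sum>X\<in>{X \<in> designs N T. test_input K S X s = u}. design_prob q N T X) =
        (\<Sum>X\<in>{X \<in> PiE grid (\<lambda>_. UNIV). \<forall>p\<in>J. X p = u (idx (fst p))}. \<Prod>p\<in>grid. bern q (X p))"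
      unfolding design_prob_def designs_def grid_def by simp
    also have "\<dots> = (\<Prod>p\<in>J. bern q (u (idx (fst p))))"
      by (rule sum_PiE_fixing_prod[OF _ JG]) (auto simp: grid_def bern_sum_eq_1)
    also have "\<dots> = bern_prod q {0..<K} u"
      unfolding J_def bern_prod_def prod.reindex[OF injJ] using idx by simp
    finally show ?thesis .
  qed
  have "(\<Sum>X\<in>designs N T. design_prob q N T X * G (test_input K S X s)) =
      (\<Sum>u\<in>U. \<Sum>X\<in>{X \<in> designs N T. test_input K S X s = u}. design_prob q N T X * G (test_input K S X s))"
    by (rule sum.group[symmetric]) (auto simp: designs_def U_def test_input_def finite_PiE)
  also have "\<dots> = (\<Sum>u\<in>U. (\<Sum>X\<in>{X \<in> designs N T. test_input K S X s = u}. design_prob q N T X) * G u)"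
    by (intro sum.cong refl) (auto simp: sum_distrib_right)
  also have "\<dots> = (\<Sum>u\<in>U. bern_prod q {0..<K} u * G u)"
    using fiber by simp
  finally show ?thesis unfolding U_def .
qed

lemma marginal_channel_test_input_pos:
  assumes vc: "valid_channel K W" and q: "0 \<le> q" "q \<le> 1" and S: "S \<subseteq> {0..<N}" "card S = K"
    and A: "A \<subseteq> {0..<K}" and t: "t < T" and X: "design_prob q N T X \<noteq> 0"
    and W: "0 < W (test_input K S X t) y"
  shows "0 < marginal_channel K q W A (test_input K S X t) y"
proof -
  have bn: "bij_betw (\<lambda>k. sorted_list_of_set S ! k) {0..<K} S"
    using S finite_subset by (intro bij_betw_sorted_nth) auto
  have "sorted_list_of_set S ! k \<in> S" if "k \<in> A" for k
    using bij_betw_apply[OF bn] that A by blast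
  then have "(sorted_list_of_set S ! k, t) \<in> {0..<N} \<times> {0..<T}" if "k \<in> A" for k
    using subsetD[OF S(1)] that t by simp
  then have "bern q (test_input K S X t k) \<noteq> 0" if "k \<in> A" for k
    using X that A unfolding design_prob_def test_input_def by auto
  moreover have "finite A" using A finite_subset by blast
  ultimately have "bern_prod q A (test_input K S X t) \<noteq> 0"
    unfolding bern_prod_def by simp
  then have "0 < bern_prod q A (test_input K S X t)"
    using bern_prod_nonneg[OF q] by (simp add: less_le)
  then have "0 < bern_prod q A (test_input K S X t) * W (test_input K S X t) y" using W by simp
  also have "\<dots> \<le> marginal_channel K q W A (test_input K S X t) y"
    using vc q by (rule marginal_channel_ge) (auto simp: test_input_def)
  finally show ?thesis .
qed

lemma log_chan_prob_ratio:
  assumes "\<And>t. t < T \<Longrightarrow> 0 < W (test_input K S X t) (Y t)"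
    and "\<And>t. t < T \<Longrightarrow> 0 < V (test_input K S X t) (Y t)"
  shows "log 2 (chan_prob K W S X T Y / chan_prob K V S X T Y) =
    (\<Sum>t<T. log 2 (W (test_input K S X t) (Y t) / V (test_input K S X t) (Y t)))"
proof -
  have "ln (\<Prod>t<T. W (test_input K S X t) (Y t) / V (test_input K S X t) (Y t)) =
      (\<Sum>t<T. ln (W (test_input K S X t) (Y t) / V (test_input K S X t) (Y t)))"
    using assms by (intro ln_prod) (auto simp: less_imp_neq[symmetric])
  then show ?thesis unfolding chan_prob_def log_def
    by (simp add: prod_dividef[symmetric] sum_divide_distrib)
qed

lemma chan_prob_marginal_pos:
  assumes vc: "valid_channel K W" and q: "0 \<le> q" "q \<le> 1"
    and S: "S \<subseteq> {0..<N}" "card S = K" and A: "A \<subseteq> {0..<K}"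
    and pos: "design_prob q N T X \<noteq> 0" "chan_prob K W S X T Y \<noteq> 0"
  shows "0 < chan_prob K (marginal_channel K q W A) S X T Y"
proof -
  have "W (test_input K S X t) (Y t) \<noteq> 0" if "t < T" for t
    using that pos(2) unfolding chan_prob_def by auto
  then have "0 < W (test_input K S X t) (Y t)" if "t < T" for t
    using that vc by (simp add: valid_channel_def less_le)
  then show ?thesis
    unfolding chan_prob_def using pos(1)
    by (intro prod_pos) (auto intro: marginal_channel_test_input_pos[OF vc q S A])
qed

lemma divergence_chan_prob_marginal:
  assumes vc: "valid_channel K W" and q: "0 \<le> q" "q \<le> 1"
    and S: "S \<subseteq> {0..<N}" "card S = K" and A: "A \<subseteq> {0..<K}"
  shows "(\<Sum>X\<in>designs N T. \<Sum>Y\<in>outcomes T. design_prob q N T X * chan_prob K W S X T Y *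
            log 2 (design_prob q N T X * chan_prob K W S X T Y /
              (design_prob q N T X * chan_prob K (marginal_channel K q W A) S X T Y)))
         = real T * single_letter_mi K q W A"
proof -
  define u where "u = test_input K S"
  define l where "l = (\<lambda>v b. log 2 (W v b / marginal_channel K q W A v b))"
  have Wn: "\<forall>v y. 0 \<le> W v y" and Ws: "\<forall>v. W v True + W v False = 1"
    using vc unfolding valid_channel_def by auto
  have pointwise: "design_prob q N T X * chan_prob K W S X T Y *
        log 2 (design_prob q N T X * chan_prob K W S X T Y /
              (design_prob q N T X * chan_prob K (marginal_channel K q W A) S X T Y))
      = design_prob q N T X * ((\<Prod>t<T. W (u X t) (Y t)) * (\<Sum>s<T. l (u X s) (Y s)))" for X Y
  proof (cases "design_prob q N T X = 0 \<or> chan_prob K W S X T Y = 0")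
    case False
    then have "W (u X t) (Y t) \<noteq> 0" if "t < T" for t
      using that unfolding chan_prob_def u_def by auto
    then have W: "0 < W (u X t) (Y t)" if "t < T" for t
      using that Wn by (simp add: less_le)
    then have "0 < marginal_channel K q W A (u X t) (Y t)" if "t < T" for t
      using False that unfolding u_def by (intro marginal_channel_test_input_pos[OF vc q S A]) auto
    then show ?thesis
      using W log_chan_prob_ratio[of T W K S X Y "marginal_channel K q W A"]
      unfolding u_def l_def chan_prob_def by (simp add: mult.assoc)
  qed (auto simp: chan_prob_def u_def)
  have "(\<Sum>X\<in>designs N T. \<Sum>Y\<in>outcomes T. design_prob q N T X * chan_prob K W S X T Y *
            log 2 (design_prob q N T X * chan_prob K W S X T Y /
              (design_prob q N T X * chan_prob K (marginal_channel K q W A) S X T Y)))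
      = (\<Sum>X\<in>designs N T. design_prob q N T X *
           (\<Sum>Y\<in>outcomes T. (\<Prod>t<T. W (u X t) (Y t)) * (\<Sum>s<T. l (u X s) (Y s))))"
    by (simp only: pointwise sum_distrib_left)
  also have "\<dots> = (\<Sum>X\<in>designs N T. design_prob q N T X * (\<Sum>s<T. \<Sum>b\<in>UNIV. W (u X s) b * l (u X s) b))"
    using Ws by (subst sum_outcomes_prod_mult_sum) auto
  also have "\<dots> = (\<Sum>s<T. \<Sum>X\<in>designs N T. design_prob q N T X *
                     (\<Sum>b\<in>UNIV. W (test_input K S X s) b * l (test_input K S X s) b))"
    unfolding u_def by (simp add: sum_distrib_left sum.swap[of _ "designs N T"])
  also have "\<dots> = (\<Sum>s<T. \<Sum>v\<in>PiE {0..<K} (\<lambda>_. UNIV). bern_prod q {0..<K} v * (\<Sum>b\<in>UNIV. W v b * l v b))"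
    by (intro sum.cong refl sum_design_test_input[OF S]) auto
  also have "\<dots> = real T * single_letter_mi K q W A"
    unfolding single_letter_mi_eq_divergence[OF A vc] l_def by (simp add: sum_distrib_left mult.assoc)
  finally show ?thesis .
qed

section \<open>Averaging over the defective set\<close>

lemma card_subsets_avoiding:
  assumes "s2 \<subseteq> {0..<N}" "card s2 = K - i" "i \<le> K" "K \<le> N"
  shows "card {S1. S1 \<subseteq> {0..<N} - s2 \<and> card S1 = i} = (N - K + i) choose i"
proof -
  have "finite s2" using assms(1) finite_subset by blast
  then have "card ({0..<N} - s2) = N - K + i"
    using assms by (simp add: card_Diff_subset)
  then show ?thesis using n_subsets[of "{0..<N} - s2" i] by simp
qed

lemma card_ksubsets: "card (ksubsets N K) = N choose K"
  unfolding ksubsets_def using n_subsets[of "{0..<N}" K] by simp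

lemma sum_split_ksubsets:
  fixes \<phi> :: "nat set \<Rightarrow> real"
  assumes iK: "i \<le> K"
  shows "(\<Sum>s2\<in>{s2. s2 \<subseteq> {0..<N} \<and> card s2 = K - i}. \<Sum>S1\<in>{S1. S1 \<subseteq> {0..<N} - s2 \<and> card S1 = i}. \<phi> (S1 \<union> s2))
       = real (K choose (K - i)) * (\<Sum>S\<in>ksubsets N K. \<phi> S)"
proof -
  define \<Sigma>2 where "\<Sigma>2 = {s2. s2 \<subseteq> {0..<N} \<and> card s2 = K - i}"
  define Fam where "Fam = (\<lambda>s2. {S1. S1 \<subseteq> {0..<N} - s2 \<and> card S1 = i})"
  define Sub where "Sub = (\<lambda>S :: nat set. {s2. s2 \<subseteq> S \<and> card s2 = K - i})"
  define h where "h = (\<lambda>(s2 :: nat set, S1 :: nat set). (S1 \<union> s2, s2))"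
  have fin: "finite {S. S \<subseteq> {0..<N} \<and> P S}" for P by (rule finite_subset[of _ "Pow {0..<N}"]) auto
  have finK: "finite S" if "S \<in> ksubsets N K" for S
    using that finite_subset unfolding ksubsets_def by auto
  have hb: "bij_betw h (Sigma \<Sigma>2 Fam) (Sigma (ksubsets N K) Sub)"
  proof (rule bij_betw_byWitness[where f' = "\<lambda>(S, s2). (s2, S - s2)"])
    show "h ` Sigma \<Sigma>2 Fam \<subseteq> Sigma (ksubsets N K) Sub"
    proof (rule image_subsetI)
      fix z assume "z \<in> Sigma \<Sigma>2 Fam"
      then obtain s2 S1 where z: "z = (s2, S1)" "s2 \<in> \<Sigma>2" "S1 \<in> Fam s2" by blast
      from z have "finite s2" "finite S1"
        unfolding \<Sigma>2_def Fam_def by (auto intro: finite_subset)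
      then show "h z \<in> Sigma (ksubsets N K) Sub"
        using z iK card_Un_disjoint[of S1 s2]
        unfolding h_def \<Sigma>2_def Fam_def ksubsets_def Sub_def by auto
    qed
    show "(\<lambda>(S, s2). (s2, S - s2)) ` Sigma (ksubsets N K) Sub \<subseteq> Sigma \<Sigma>2 Fam"
    proof (rule image_subsetI)
      fix z assume "z \<in> Sigma (ksubsets N K) Sub"
      then obtain S s2 where z: "z = (S, s2)" and S: "S \<in> ksubsets N K" and s2: "s2 \<in> Sub S" by blast
      then have "finite s2" using finK finite_subset unfolding Sub_def by blast
      then show "(\<lambda>(S, s2). (s2, S - s2)) z \<in> Sigma \<Sigma>2 Fam"
        using z S s2 iK unfolding \<Sigma>2_def Fam_def ksubsets_def Sub_def by (auto simp: card_Diff_subset)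
    qed
  qed (auto simp: h_def Fam_def Sub_def)
  have "(\<Sum>s2\<in>\<Sigma>2. \<Sum>S1\<in>Fam s2. \<phi> (S1 \<union> s2)) = (\<Sum>y\<in>Sigma \<Sigma>2 Fam. \<phi> (fst (h y)))"
    unfolding h_def \<Sigma>2_def Fam_def by (subst sum.Sigma) (auto simp: fin split_def)
  also have "\<dots> = (\<Sum>z\<in>Sigma (ksubsets N K) Sub. \<phi> (fst z))"
    by (rule sum.reindex_bij_betw[OF hb])
  also have "\<dots> = (\<Sum>S\<in>ksubsets N K. \<Sum>s2\<in>Sub S. \<phi> S)"
  proof (subst sum.Sigma)
    show "finite (ksubsets N K)" unfolding ksubsets_def by (rule fin)
    show "\<forall>S\<in>ksubsets N K. finite (Sub S)"
      using finK unfolding Sub_def by (auto intro: finite_subset[of _ "Pow _"])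
  qed (simp add: split_def)
  also have "\<dots> = (\<Sum>S\<in>ksubsets N K. real (card (Sub S)) * \<phi> S)"
    by simp
  also have "\<dots> = (\<Sum>S\<in>ksubsets N K. real (K choose (K - i)) * \<phi> S)"
    using finK n_subsets unfolding Sub_def ksubsets_def by (intro sum.cong) auto
  finally show ?thesis unfolding \<Sigma>2_def Fam_def by (simp add: sum_distrib_left)
qed

lemma exists_good_complement:
  fixes \<phi> :: "nat set \<Rightarrow> real"
  assumes iK: "i \<le> K" and KN: "K \<le> N"
    and avg: "(\<Sum>S\<in>ksubsets N K. \<phi> S) \<le> real (card (ksubsets N K)) * \<delta>"
  obtains s2 where "s2 \<subseteq> {0..<N}" "card s2 = K - i"
    "(\<Sum>S1\<in>{S1. S1 \<subseteq> {0..<N} - s2 \<and> card S1 = i}. \<phi> (S1 \<union> s2)) \<le> real ((N - K + i) choose i) * \<delta>"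
proof (rule ccontr)
  define \<Sigma>2 where "\<Sigma>2 = {s2. s2 \<subseteq> {0..<N} \<and> card s2 = K - i}"
  define C where "C = real ((N - K + i) choose i)"
  note good = that
  assume "\<not> thesis"
  then have bad: "C * \<delta> < (\<Sum>S1\<in>{S1. S1 \<subseteq> {0..<N} - s2 \<and> card S1 = i}. \<phi> (S1 \<union> s2))"
    if "s2 \<in> \<Sigma>2" for s2
    using good[of s2] that unfolding \<Sigma>2_def C_def by force
  have "{0..<K - i} \<in> \<Sigma>2" unfolding \<Sigma>2_def using KN by auto
  moreover have "finite \<Sigma>2" unfolding \<Sigma>2_def by (rule finite_subset[of _ "Pow {0..<N}"]) auto
  ultimately have "(\<Sum>s2\<in>\<Sigma>2. C * \<delta>) <
      (\<Sum>s2\<in>\<Sigma>2. \<Sum>S1\<in>{S1. S1 \<subseteq> {0..<N} - s2 \<and> card S1 = i}. \<phi> (S1 \<union> s2))"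
    using bad by (intro sum_strict_mono) auto
  also have "\<dots> = real (K choose (K - i)) * (\<Sum>S\<in>ksubsets N K. \<phi> S)"
    unfolding \<Sigma>2_def by (rule sum_split_ksubsets[OF iK])
  also have "\<dots> \<le> real (K choose (K - i)) * (real (card (ksubsets N K)) * \<delta>)"
    using avg by (intro mult_left_mono) auto
  also have "\<dots> = (\<Sum>s2\<in>\<Sigma>2. C * \<delta>)"
    using sum_split_ksubsets[OF iK, of "\<lambda>_. 1" N] card_subsets_avoiding[OF _ _ iK KN]
    unfolding \<Sigma>2_def C_def by (simp add: mult.assoc)
  finally show False by simp
qed

section \<open>The converse bound\<close>

lemma sum_decoder_hits_le:
  fixes R :: "'x \<Rightarrow> 'y \<Rightarrow> real"
  assumes "finite F" "inj_on g F" "\<And>x y. 0 \<le> R x y"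
  shows "(\<Sum>a\<in>F. \<Sum>x\<in>Xs. \<Sum>y\<in>Ys. if d x y = g a then R x y else 0) \<le> (\<Sum>x\<in>Xs. \<Sum>y\<in>Ys. R x y)"
proof -
  have "(\<Sum>a\<in>F. if d x y = g a then R x y else 0) \<le> R x y" for x y
  proof -
    have "card {a \<in> F. d x y = g a} \<le> Suc 0"
      using assms(1,2) by (subst card_le_Suc0_iff_eq) (auto simp: inj_on_def)
    then have "real (card {a \<in> F. d x y = g a}) * R x y \<le> 1 * R x y"
      using assms(3) by (intro mult_right_mono) auto
    then show ?thesis using assms(1) by (simp add: sum.If_cases Int_def conj_commute)
  qed
  then have "(\<Sum>x\<in>Xs. \<Sum>y\<in>Ys. \<Sum>a\<in>F. if d x y = g a then R x y else 0) \<le> (\<Sum>x\<in>Xs. \<Sum>y\<in>Ys. R x y)"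
    by (intro sum_mono)
  then show ?thesis by (simp add: sum.swap[of _ F])
qed

lemma union_subset_avoiding:
  fixes N :: nat
  assumes "S1 \<in> {S1. S1 \<subseteq> {0..<N} - s2 \<and> card S1 = i}" "s2 \<subseteq> {0..<N}" "card s2 = K - i" "i \<le> K"
  shows "S1 \<union> s2 \<subseteq> {0..<N}" "card (S1 \<union> s2) = K" "finite (S1 \<union> s2)" "(S1 \<union> s2) - s2 = S1"
proof -
  have "S1 \<subseteq> {0..<N}" using assms(1) by auto
  then have "finite S1" "finite s2" using assms(2) finite_subset by auto
  then show "S1 \<union> s2 \<subseteq> {0..<N}" "card (S1 \<union> s2) = K" "finite (S1 \<union> s2)" "(S1 \<union> s2) - s2 = S1"
    using assms card_Un_disjoint[of S1 s2] by auto
qed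

text \<open>Fano's inequality for a message \<open>a\<close> uniform on \<open>F\<close>, observed through \<open>P a\<close>, measured
  against a reference law \<open>R\<close> that does not depend on \<open>a\<close>.\<close>
lemma fano_uniform_family:
  fixes P :: "'a \<Rightarrow> 'x \<Rightarrow> 'y \<Rightarrow> real" and R :: "'x \<Rightarrow> 'y \<Rightarrow> real"
  assumes fin: "finite F" "finite Xs" "finite Ys" and C: "card F = C" "1 \<le> C" and eps: "0 < \<epsilon>"
    and P: "\<And>a x y. 0 \<le> P a x y" "\<And>a. a \<in> F \<Longrightarrow> (\<Sum>x\<in>Xs. \<Sum>y\<in>Ys. P a x y) = 1"
    and R: "\<And>x y. 0 \<le> R x y" "(\<Sum>x\<in>Xs. \<Sum>y\<in>Ys. R x y) = 1"
    and ac: "\<And>a x y. a \<in> F \<Longrightarrow> x \<in> Xs \<Longrightarrow> 0 < P a x y \<Longrightarrow> 0 < R x y"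
    and g: "inj_on g F"
    and err: "(\<Sum>a\<in>F. \<Sum>x\<in>Xs. \<Sum>y\<in>Ys. P a x y * (if d x y = g a then 0 else 1))
                \<le> real C * (min \<epsilon> 1 / 9)\<^sup>2"
    and J: "\<And>a. a \<in> F \<Longrightarrow> (\<Sum>x\<in>Xs. \<Sum>y\<in>Ys. P a x y * log 2 (P a x y / R x y)) = J"
  shows "(1 - \<epsilon>) * log 2 (real C) \<le> J"
proof -
  define Z where "Z = F \<times> Xs \<times> Ys"
  define p where "p = (\<lambda>(a, x, y). P a x y / real C)"
  define r where "r = (\<lambda>(a :: 'a, x, y). R x y / real C)"
  define E where "E = {z \<in> Z. d (fst (snd z)) (snd (snd z)) = g (fst z)}"
  have Cpos: "0 < real C" using C by simp
  have sumZ: "sum f Z = (\<Sum>a\<in>F. \<Sum>x\<in>Xs. \<Sum>y\<in>Ys. f (a, x, y))" for f :: "_ \<Rightarrow> real"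
    unfolding Z_def by (simp add: sum.cartesian_product)
  have finZ: "finite Z" unfolding Z_def using fin by simp
  have sumE: "sum f E = (\<Sum>a\<in>F. \<Sum>x\<in>Xs. \<Sum>y\<in>Ys. if d x y = g a then f (a, x, y) else 0)"
    for f :: "_ \<Rightarrow> real"
  proof -
    have "sum f E = (\<Sum>z\<in>Z. if d (fst (snd z)) (snd (snd z)) = g (fst z) then f z else 0)"
      unfolding E_def by (rule sum.inter_filter[OF finZ])
    then show ?thesis by (simp add: sumZ)
  qed
  have "(1 - \<epsilon>) * log 2 (real C) \<le> (\<Sum>z\<in>Z. p z * log 2 (p z / r z))"
  proof (rule fano_divergence_bound[OF _ _ _ _ _ _ eps C(2)])
    show "finite Z" by (fact finZ)
    show "\<forall>z\<in>Z. 0 \<le> p z" "\<forall>z\<in>Z. 0 \<le> r z" using P(1) R(1) Cpos by (auto simp: p_def r_def)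
    show "\<forall>z\<in>Z. 0 < p z \<longrightarrow> 0 < r z" using ac Cpos by (auto simp: Z_def p_def r_def zero_less_divide_iff)
    show "sum p Z = 1" using P(2) C Cpos by (simp add: sumZ p_def flip: sum_divide_distrib)
    show "sum r Z = 1" using R(2) C Cpos by (simp add: sumZ r_def flip: sum_divide_distrib)
    show "E \<subseteq> Z" unfolding E_def by auto
    have "sum p E = 1 - (\<Sum>a\<in>F. \<Sum>x\<in>Xs. \<Sum>y\<in>Ys. P a x y * (if d x y = g a then 0 else 1)) / real C"
    proof -
      have "sum p E = (\<Sum>a\<in>F. \<Sum>x\<in>Xs. \<Sum>y\<in>Ys. (P a x y - P a x y * (if d x y = g a then 0 else 1)) / real C)"
        unfolding sumE p_def by (intro sum.cong refl) auto
      also have "\<dots> = (real C - (\<Sum>a\<in>F. \<Sum>x\<in>Xs. \<Sum>y\<in>Ys. P a x y * (if d x y = g a then 0 else 1))) / real C"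
        using P(2) C by (simp add: sum_subtractf flip: sum_divide_distrib diff_divide_distrib)
      finally show ?thesis using Cpos by (simp add: diff_divide_distrib)
    qed
    then show "1 - (min \<epsilon> 1 / 9)\<^sup>2 \<le> sum p E"
      using err Cpos by (simp add: divide_le_eq mult.commute)
    have "sum r E = (\<Sum>a\<in>F. \<Sum>x\<in>Xs. \<Sum>y\<in>Ys. (if d x y = g a then R x y else 0) / real C)"
      unfolding sumE r_def by (intro sum.cong refl) auto
    also have "\<dots> = (\<Sum>a\<in>F. \<Sum>x\<in>Xs. \<Sum>y\<in>Ys. if d x y = g a then R x y else 0) / real C"
      by (simp add: sum_divide_distrib)
    also have "\<dots> \<le> 1 / real C"
      using sum_decoder_hits_le[where R = R and Xs = Xs and Ys = Ys and d = d, OF fin(1) g R(1)] R(2) Cpos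
      by (intro divide_right_mono) auto
    finally show "sum r E \<le> 1 / real C" .
  qed
  also have "(\<Sum>z\<in>Z. p z * log 2 (p z / r z)) =
      (\<Sum>a\<in>F. (\<Sum>x\<in>Xs. \<Sum>y\<in>Ys. P a x y * log 2 (P a x y / R x y)) / real C)"
    using Cpos by (simp add: sumZ p_def r_def sum_divide_distrib)
  also have "\<dots> = (\<Sum>a\<in>F. J / real C)" using J by simp
  also have "\<dots> = J" using C Cpos by simp
  finally show ?thesis .
qed

lemma fano_subsets_avoiding:
  fixes N :: nat
  assumes eps: "0 < \<epsilon>" and vc: "valid_channel K W" and q: "0 \<le> q" "q \<le> 1"
    and iK: "i \<le> K" and KN: "K \<le> N" and s2: "s2 \<subseteq> {0..<N}" "card s2 = K - i"
    and A: "A \<subseteq> {0..<K}" "card A = i"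
    and err: "(\<Sum>S1\<in>{S1. S1 \<subseteq> {0..<N} - s2 \<and> card S1 = i}. \<Sum>X\<in>designs N T. \<Sum>Y\<in>outcomes T.
        design_prob q N T X * chan_prob K W (S1 \<union> s2) X T Y * (if dec X Y = S1 \<union> s2 then 0 else 1))
      \<le> real ((N - K + i) choose i) * (min \<epsilon> 1 / 9)\<^sup>2"
  shows "(1 - \<epsilon>) * log 2 (real ((N - K + i) choose i)) \<le> real T * single_letter_mi K q W A"
proof -
  define Fam where "Fam = {S1. S1 \<subseteq> {0..<N} - s2 \<and> card S1 = i}"
  define V where "V = (\<lambda>S1. marginal_channel K q W (positions K (S1 \<union> s2) S1))"
  have fam: "S1 \<union> s2 \<subseteq> {0..<N}" "card (S1 \<union> s2) = K" "finite (S1 \<union> s2)" "(S1 \<union> s2) - s2 = S1"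
    if "S1 \<in> Fam" for S1
    using union_subset_avoiding[OF that[unfolded Fam_def] s2 iK] by auto
  have Wn: "\<And>u y. 0 \<le> W u y" and Ws: "\<And>u. W u True + W u False = 1"
    using vc by (auto simp: valid_channel_def)
  have cardFam: "card Fam = (N - K + i) choose i"
    unfolding Fam_def by (rule card_subsets_avoiding[OF s2 iK KN])
  moreover have C1: "1 \<le> (N - K + i) choose i" by (simp add: Suc_le_eq)
  ultimately have "Fam \<noteq> {}" by auto
  then obtain S0 where S0: "S0 \<in> Fam" by blast
  have V_eq: "chan_prob K (V S0) (S0 \<union> s2) X T Y = chan_prob K (V S1) (S1 \<union> s2) X T Y"
    if "S1 \<in> Fam" for S1 X Y
    using marginal_channel_test_input_eq[OF vc fam(3,2)[OF S0] _ fam(3,2)[OF that], of s2 q X]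
    unfolding chan_prob_def V_def fam(4)[OF S0] fam(4)[OF that] by simp
  define P where "P = (\<lambda>S1 X Y. design_prob q N T X * chan_prob K W (S1 \<union> s2) X T Y)"
  define R where "R = (\<lambda>X Y. design_prob q N T X * chan_prob K (V S0) (S0 \<union> s2) X T Y)"
  have R_eq: "R X Y = design_prob q N T X * chan_prob K (V S1) (S1 \<union> s2) X T Y" if "S1 \<in> Fam" for S1 X Y
    unfolding R_def V_eq[OF that] ..
  show ?thesis
  proof (rule fano_uniform_family[where F = Fam and g = "\<lambda>S1. S1 \<union> s2" and d = dec and P = P and R = R])
    show "finite Fam" unfolding Fam_def by simp
    show "finite (designs N T)" "finite (outcomes T)"
      unfolding designs_def outcomes_def by (simp_all add: finite_PiE)
    show "card Fam = (N - K + i) choose i" "1 \<le> (N - K + i) choose i" "0 < \<epsilon>" by fact+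
    show "0 \<le> P S1 X Y" for S1 X Y
      using design_prob_nonneg[OF q] chan_prob_nonneg[where W = W, OF Wn] by (simp add: P_def)
    show "(\<Sum>X\<in>designs N T. \<Sum>Y\<in>outcomes T. P S1 X Y) = 1" for S1
      unfolding P_def by (rule chan_prob_sum_eq_1[OF Ws])
    show "0 \<le> R X Y" for X Y
      using design_prob_nonneg[OF q] chan_prob_nonneg[where W = "V S0"]
        marginal_channel_nonneg[OF vc q] by (simp add: R_def V_def)
    show "(\<Sum>X\<in>designs N T. \<Sum>Y\<in>outcomes T. R X Y) = 1"
      unfolding R_def V_def by (intro chan_prob_sum_eq_1 marginal_channel_sum_eq_1[OF vc positions_subset])
    show "inj_on (\<lambda>S1. S1 \<union> s2) Fam"
    proof (rule inj_onI)
      fix S1 S1' assume "S1 \<in> Fam" "S1' \<in> Fam" "S1 \<union> s2 = S1' \<union> s2"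
      then show "S1 = S1'" using fam(4) by metis
    qed
    show "(\<Sum>S1\<in>Fam. \<Sum>X\<in>designs N T. \<Sum>Y\<in>outcomes T. P S1 X Y * (if dec X Y = S1 \<union> s2 then 0 else 1))
        \<le> real ((N - K + i) choose i) * (min \<epsilon> 1 / 9)\<^sup>2"
      using err unfolding Fam_def P_def .
  next
    fix S1 X Y assume S1: "S1 \<in> Fam" and "0 < P S1 X Y"
    then have D: "design_prob q N T X \<noteq> 0" and "chan_prob K W (S1 \<union> s2) X T Y \<noteq> 0"
      unfolding P_def by auto
    then have "0 < chan_prob K (V S1) (S1 \<union> s2) X T Y"
      unfolding V_def using fam(1,2)[OF S1] by (intro chan_prob_marginal_pos[OF vc q _ _ positions_subset])
    moreover have "0 < design_prob q N T X" using D design_prob_nonneg[OF q] by (simp add: less_le)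
    ultimately show "0 < R X Y" unfolding R_eq[OF S1] by simp
  next
    fix S1 assume S1: "S1 \<in> Fam"
    have "card (positions K (S1 \<union> s2) S1) = card A"
      using card_positions[OF fam(3,2)[OF S1]] A S1 Fam_def by auto
    then have "single_letter_mi K q W (positions K (S1 \<union> s2) S1) = single_letter_mi K q W A"
      using vc A by (intro single_letter_mi_card_eq positions_subset) auto
    then show "(\<Sum>X\<in>designs N T. \<Sum>Y\<in>outcomes T. P S1 X Y * log 2 (P S1 X Y / R X Y)) =
        real T * single_letter_mi K q W A"
      unfolding P_def R_eq[OF S1] V_def
      using divergence_chan_prob_marginal[OF vc q fam(1,2)[OF S1] positions_subset] by simp
  qed
qed

theorem theorem3:
  fixes \<epsilon> :: real
  assumes "\<epsilon> > 0"
  shows "\<exists>\<delta>>0. \<forall>N K T q W dec.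
     K \<le> N \<and> 0 \<le> q \<and> q \<le> 1 \<and> valid_channel K W \<and> error_prob N K T q W dec \<le> \<delta> \<longrightarrow>
     (\<forall>S\<in>ksubsets N K. \<forall>i\<in>{1..K}. \<forall>(S1, S2)\<in>Xi S K i.
        (1 - \<epsilon>) * log 2 (real ((N - K + i) choose i))
          \<le> real T * single_letter_mi K q W (positions K S S1))"
proof (intro exI[of _ "(min \<epsilon> 1 / 9)\<^sup>2"] conjI allI impI ballI)
  show "0 < (min \<epsilon> 1 / 9)\<^sup>2" using assms by simp
next
  fix N K T q W dec S i x
  assume H: "K \<le> N \<and> 0 \<le> q \<and> q \<le> 1 \<and> valid_channel K W \<and> error_prob N K T q W dec \<le> (min \<epsilon> 1 / 9)\<^sup>2"
    and S: "S \<in> ksubsets N K" and i: "i \<in> {1..K}" and x: "x \<in> Xi S K i"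
  obtain S1 S2 where x12: "x = (S1, S2)" and "S1 \<subseteq> S" "card S1 = i"
    using x unfolding Xi_def by auto
  moreover have "finite S" "card S = K" using S finite_subset unfolding ksubsets_def by auto
  ultimately have A: "positions K S S1 \<subseteq> {0..<K}" "card (positions K S S1) = i"
    using positions_subset card_positions by auto
  define err where "err = (\<lambda>S. \<Sum>X\<in>designs N T. \<Sum>Y\<in>outcomes T.
    design_prob q N T X * chan_prob K W S X T Y * (if dec X Y = S then 0 else 1))"
  have "0 < card (ksubsets N K)" using H by (simp add: card_ksubsets)
  then have "(\<Sum>S\<in>ksubsets N K. err S) \<le> real (card (ksubsets N K)) * (min \<epsilon> 1 / 9)\<^sup>2"
    using H by (simp add: error_prob_def err_def divide_le_eq mult.commute)
  then obtain s2 where "s2 \<subseteq> {0..<N}" "card s2 = K - i"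
    "(\<Sum>S1\<in>{S1. S1 \<subseteq> {0..<N} - s2 \<and> card S1 = i}. err (S1 \<union> s2))
      \<le> real ((N - K + i) choose i) * (min \<epsilon> 1 / 9)\<^sup>2"
    using exists_good_complement[of i K N err] i H by auto
  then show "case x of (S1, S2) \<Rightarrow> (1 - \<epsilon>) * log 2 (real ((N - K + i) choose i))
      \<le> real T * single_letter_mi K q W (positions K S S1)"
    unfolding x12 err_def using fano_subsets_avoiding[OF assms _ _ _ _ _ _ _ A] i H by auto
qed

end
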